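(* Let $\varepsilon>0$ be a constant, let $C=12/\varepsilon$, and let $G=(V,E)$ be a graph on $n$ vertices with $\delta(G)\geq\left(\frac12+\varepsilon\right)n$. Then, for all sufficiently large $n$, there exists a set $L\subseteq V$ with $|L|\leq C\log n$ such that every pair of distinct vertices $u,v\in V\setminus L$ has at least $12\log n$ common $G$-neighbors in $L$.
   Context: $\log$ denotes the natural logarithm. *)

theory Defs
  imports Complex_Main
begin

definition simple_graph :: "nat set \<Rightarrow> (nat \<Rightarrow> nat \<Rightarrow> bool) \<Rightarrow> bool" where
  "simple_graph V E \<longleftrightarrow> finite V \<and> (\<forall>u v. E u v \<longrightarrow> u \<in> V \<and> v \<in> V)
     \<and> (\<forall>u v. E u v \<longrightarrow> E v u) \<and> (\<forall>u. \<not> E u u)"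

definition degree :: "nat set \<Rightarrow> (nat \<Rightarrow> nat \<Rightarrow> bool) \<Rightarrow> nat \<Rightarrow> nat" where
  "degree V E v = card {w \<in> V. E v w}"

definition min_degree :: "nat set \<Rightarrow> (nat \<Rightarrow> nat \<Rightarrow> bool) \<Rightarrow> nat" where
  "min_degree V E = Min (degree V E ` V)"

end

theory Submission
  imports Defs
begin

text \<open>Sample a sequence \<open>xs\<close> of \<open>m \<approx> (12/\<epsilon>) ln n\<close> vertices and take \<open>L = set xs\<close>.
Any two vertices have a set \<open>S\<close> of at least \<open>2\<epsilon>n\<close> common neighbours. Summing the weight
\<open>2^-|S \<inter> set xs|\<close> over all \<open>n^m\<close> sequences gives at most \<open>(n - (|S| - m)/2)^m \<le> n^m e^-(\<epsilon> - m/2n)m\<close>,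
so by Markov's inequality fewer than \<open>K = 12 ln n\<close> hits occur for at most a \<open>2^K e^-(\<epsilon> - m/2n)m\<close>
fraction of sequences. With this choice of \<open>m\<close> the union bound over the \<open>n\<^sup>2\<close> pairs
leaves a good sequence.\<close>

lemma sum_half_power_card_Int_Cons_le:
  fixes S V :: "'a set"
  assumes fin: "finite V" and SV: "S \<subseteq> V"
  shows "(\<Sum>x\<in>V. (1/2::real) ^ card (S \<inter> set (x#xs)))
         \<le> (1/2) ^ card (S \<inter> set xs) * (real (card V) - (real (card S) - real (length xs)) / 2)"
proof -
  define T where "T = S - set xs"
  define d where "d = (1/2::real) ^ card (S \<inter> set xs)"
  have TV: "T \<subseteq> V" and finT: "finite T" using SV fin finite_subset unfolding T_def by auto
  have new: "(1/2::real) ^ card (S \<inter> set (x#xs)) = d / 2" if "x \<in> T" for x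
  proof -
    have "S \<inter> set (x#xs) = insert x (S \<inter> set xs)" "x \<notin> S \<inter> set xs" using that T_def by auto
    then show ?thesis using d_def by simp
  qed
  have old: "(1/2::real) ^ card (S \<inter> set (x#xs)) = d" if "x \<in> V - T" for x
  proof -
    have "S \<inter> set (x#xs) = S \<inter> set xs" using that T_def by auto
    then show ?thesis using d_def by simp
  qed
  have "(\<Sum>x\<in>V. (1/2::real) ^ card (S \<inter> set (x#xs)))
      = (\<Sum>x\<in>T. (1/2::real) ^ card (S \<inter> set (x#xs))) + (\<Sum>x\<in>V - T. (1/2::real) ^ card (S \<inter> set (x#xs)))"
    by (metis sum.subset_diff[OF TV fin] add.commute)
  also have "\<dots> = real (card T) * (d/2) + (real (card V) - real (card T)) * d"
    using sum.cong[OF refl new, of T] sum.cong[OF refl old, of "V - T"]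
      card_Diff_subset[OF finT TV] card_mono[OF fin TV] by simp
  finally have eq: "(\<Sum>x\<in>V. (1/2::real) ^ card (S \<inter> set (x#xs))) = d * (real (card V) - real (card T) / 2)"
    by (simp add: algebra_simps)
  have "card S \<le> card (T \<union> set xs)"
    using finT unfolding T_def by (intro card_mono) auto
  also have "\<dots> \<le> card T + card (set xs)" by (rule card_Un_le)
  finally have "card S \<le> card T + card (set xs)" .
  then have "real (card T) \<ge> real (card S) - real (length xs)"
    using card_length[of xs] by linarith
  then show ?thesis using eq d_def by (simp add: mult_left_mono)
qed

lemma sum_half_power_card_Int_lists_le:
  fixes S V :: "'a set"
  assumes fin: "finite V" and SV: "S \<subseteq> V" and "j \<le> m"
  shows "(\<Sum>xs\<in>{xs. set xs \<subseteq> V \<and> length xs = j}. (1/2::real) ^ card (S \<inter> set xs))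
         \<le> (real (card V) - (real (card S) - real m) / 2) ^ j"
  using \<open>j \<le> m\<close>
proof (induction j)
  case 0
  have "{xs. set xs \<subseteq> V \<and> length xs = 0} = {[]}" by auto
  then show ?case by simp
next
  case (Suc j)
  define B where "B = real (card V) - (real (card S) - real m) / 2"
  have B0: "B \<ge> 0" using card_mono[OF fin SV] B_def by simp
  let ?L = "{xs. set xs \<subseteq> V \<and> length xs = j}"
  have "(\<Sum>xs\<in>{xs. set xs \<subseteq> V \<and> length xs = Suc j}. (1/2::real) ^ card (S \<inter> set xs))
      = (\<Sum>xs\<in>?L. \<Sum>x\<in>V. (1/2::real) ^ card (S \<inter> set (x#xs)))"
    unfolding lists_length_Suc_eq
    by (subst sum.reindex) (auto simp: inj_on_def sum.cartesian_product split_def)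
  also have "\<dots> \<le> (\<Sum>xs\<in>?L. (1/2) ^ card (S \<inter> set xs) * B)"
  proof (rule sum_mono)
    fix xs assume xs: "xs \<in> ?L"
    then have "(\<Sum>x\<in>V. (1/2::real) ^ card (S \<inter> set (x#xs)))
         \<le> (1/2) ^ card (S \<inter> set xs) * (real (card V) - (real (card S) - real (length xs)) / 2)"
      using sum_half_power_card_Int_Cons_le[OF fin SV] by auto
    also have "\<dots> \<le> (1/2) ^ card (S \<inter> set xs) * B"
      using xs Suc.prems B_def by (intro mult_left_mono) auto
    finally show "(\<Sum>x\<in>V. (1/2::real) ^ card (S \<inter> set (x#xs))) \<le> (1/2) ^ card (S \<inter> set xs) * B" .
  qed
  also have "\<dots> = B * (\<Sum>xs\<in>?L. (1/2) ^ card (S \<inter> set xs))"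
    by (simp add: sum_distrib_left mult.commute)
  also have "\<dots> \<le> B * B ^ j"
    using Suc B_def B0 by (intro mult_left_mono) auto
  finally show ?case using B_def by simp
qed

text \<open>Markov's inequality for the weight \<open>2^-|S \<inter> set xs|\<close>, phrased as a count of sequences.\<close>

lemma card_lists_few_hits_le:
  fixes S V :: "'a set"
  assumes fin: "finite V" and SV: "S \<subseteq> V"
  shows "real (card {xs. set xs \<subseteq> V \<and> length xs = m \<and> real (card (S \<inter> set xs)) < k})
         \<le> 2 powr k * (real (card V) - (real (card S) - real m) / 2) ^ m"
proof -
  let ?L = "{xs. set xs \<subseteq> V \<and> length xs = m}"
  let ?B = "{xs. set xs \<subseteq> V \<and> length xs = m \<and> real (card (S \<inter> set xs)) < k}"
  have "real (card ?B) = (\<Sum>xs\<in>?B. 1)" by simp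
  also have "\<dots> \<le> (\<Sum>xs\<in>?B. 2 powr k * (1/2::real) ^ card (S \<inter> set xs))"
  proof (rule sum_mono)
    fix xs assume xs: "xs \<in> ?B"
    have "2 powr k * (1/2::real) ^ card (S \<inter> set xs) = 2 powr (k - real (card (S \<inter> set xs)))"
      by (simp add: powr_diff powr_realpow power_one_over)
    moreover have "1 \<le> 2 powr (k - real (card (S \<inter> set xs)))"
      using xs by (intro ge_one_powr_ge_zero) auto
    ultimately show "1 \<le> 2 powr k * (1/2::real) ^ card (S \<inter> set xs)" by simp
  qed
  also have "\<dots> \<le> (\<Sum>xs\<in>?L. 2 powr k * (1/2::real) ^ card (S \<inter> set xs))"
    by (rule sum_mono2[OF finite_lists_length_eq[OF fin]]) auto
  also have "\<dots> = 2 powr k * (\<Sum>xs\<in>?L. (1/2::real) ^ card (S \<inter> set xs))"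
    by (simp add: sum_distrib_left)
  also have "\<dots> \<le> 2 powr k * (real (card V) - (real (card S) - real m) / 2) ^ m"
    using sum_half_power_card_Int_lists_le[OF fin SV, of m m] by (intro mult_left_mono) auto
  finally show ?thesis .
qed

lemma exists_list_hitting_all:
  fixes V :: "'a set" and S :: "'i \<Rightarrow> 'a set"
  assumes fin: "finite V" and finP: "finite P"
    and SV: "\<And>p. p \<in> P \<Longrightarrow> S p \<subseteq> V"
    and large: "\<And>p. p \<in> P \<Longrightarrow> s \<le> real (card (S p))"
    and union_bound: "real (card P) * (2 powr k * (real (card V) - (s - real m) / 2) ^ m) < real (card V) ^ m"
  shows "\<exists>xs. set xs \<subseteq> V \<and> length xs = m \<and> (\<forall>p\<in>P. k \<le> real (card (S p \<inter> set xs)))"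
proof -
  let ?L = "{xs. set xs \<subseteq> V \<and> length xs = m}"
  define Bad where "Bad p = {xs. set xs \<subseteq> V \<and> length xs = m \<and> real (card (S p \<inter> set xs)) < k}" for p
  have bound: "real (card (Bad p)) \<le> 2 powr k * (real (card V) - (s - real m) / 2) ^ m" if "p \<in> P" for p
  proof -
    have "real (card (Bad p)) \<le> 2 powr k * (real (card V) - (real (card (S p)) - real m) / 2) ^ m"
      unfolding Bad_def using card_lists_few_hits_le[OF fin SV[OF that]] .
    also have "\<dots> \<le> 2 powr k * (real (card V) - (s - real m) / 2) ^ m"
      using large[OF that] card_mono[OF fin SV[OF that]] by (intro mult_left_mono power_mono) auto
    finally show ?thesis .
  qed
  have "real (card (\<Union>p\<in>P. Bad p)) \<le> (\<Sum>p\<in>P. real (card (Bad p)))"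
    using card_UN_le[OF finP, of Bad] by (metis of_nat_le_iff of_nat_sum)
  also have "\<dots> \<le> real (card P) * (2 powr k * (real (card V) - (s - real m) / 2) ^ m)"
    using sum_mono[of P "\<lambda>p. real (card (Bad p))", OF bound] by simp
  also have "\<dots> < real (card ?L)"
    using union_bound card_lists_length_eq[OF fin, of m] by simp
  finally have "card (\<Union>p\<in>P. Bad p) < card ?L" by simp
  moreover have "finite (\<Union>p\<in>P. Bad p)"
    by (rule finite_subset[OF _ finite_lists_length_eq[OF fin, of m]]) (auto simp: Bad_def)
  ultimately have "\<not> ?L \<subseteq> (\<Union>p\<in>P. Bad p)"
    using card_mono by (metis not_le)
  then show ?thesis unfolding Bad_def by (auto simp: not_le)
qed

lemma card_common_neighbours_ge:
  assumes fin: "finite V" and "u \<in> V" "v \<in> V"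
  shows "2 * min_degree V E \<le> card {w\<in>V. E u w \<and> E v w} + card V"
proof -
  have deg: "min_degree V E \<le> card {w\<in>V. E x w}" if "x \<in> V" for x
    unfolding min_degree_def using fin that by (metis (no_types, lifting) Min_le degree_def finite_imageI image_eqI)
  have "card ({w\<in>V. E u w} \<union> {w\<in>V. E v w}) \<le> card V"
    using fin by (intro card_mono) auto
  moreover have "{w\<in>V. E u w} \<inter> {w\<in>V. E v w} = {w\<in>V. E u w \<and> E v w}" by auto
  then have "card ({w\<in>V. E u w} \<union> {w\<in>V. E v w}) + card {w\<in>V. E u w \<and> E v w}
      = card {w\<in>V. E u w} + card {w\<in>V. E v w}"
    using fin card_Un_Int[of "{w\<in>V. E u w}" "{w\<in>V. E v w}"] by simp
  ultimately show ?thesis using deg[OF \<open>u \<in> V\<close>] deg[OF \<open>v \<in> V\<close>] by linarith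
qed

lemma ln_2_le_3_4: "ln 2 \<le> (3/4::real)"
proof -
  have "(2::real) \<le> (1 + (3/4) / real (8::nat)) ^ 8"
    by (simp add: eval_nat_numeral divide_simps)
  also have "\<dots> \<le> exp (3/4)"
    by (rule exp_ge_one_plus_x_over_n_power_n) auto
  finally show ?thesis
    by (metis exp_gt_zero ln_exp ln_le_cancel_iff zero_less_numeral)
qed

lemma sampling_exponent_neg:
  fixes \<epsilon> l m x :: real
  assumes e: "\<epsilon> > 0" and x: "x > 0" and l: "l > 2 * \<epsilon>" and lx: "l / x < \<epsilon>^2 / 144"
    and m1: "12 / \<epsilon> * l - 1 \<le> m" and m2: "m \<le> 12 / \<epsilon> * l" and m0: "0 \<le> m"
  shows "2 * l + 12 * l * ln 2 - \<epsilon> * m + m^2 / (2 * x) < 0"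
proof -
  have l0: "l > 0" using l e by simp
  have "\<epsilon> * m \<ge> 12 * l - \<epsilon>"
    using mult_left_mono[OF m1, of \<epsilon>] e by (simp add: algebra_simps)
  moreover have "m^2 / (2 * x) < l / 2"
  proof -
    have "m^2 / (2 * x) \<le> (12 / \<epsilon> * l)^2 / (2 * x)"
      using m0 m2 x by (intro divide_right_mono power_mono) auto
    also have "\<dots> = 72 * l / \<epsilon>^2 * (l / x)"
      using e x by (simp add: field_simps power2_eq_square)
    also have "\<dots> < 72 * l / \<epsilon>^2 * (\<epsilon>^2 / 144)"
      using lx l0 e by (intro mult_strict_left_mono) auto
    also have "\<dots> = l / 2" using e by (simp add: field_simps power2_eq_square)
    finally show ?thesis .
  qed
  moreover have "12 * l * ln 2 \<le> 9 * l" using mult_left_mono[OF ln_2_le_3_4, of l] l0 by simp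
  ultimately show ?thesis using l by linarith
qed

lemma union_bound_lt:
  fixes \<epsilon> x :: real and m :: nat
  assumes e: "\<epsilon> > 0" "2 * \<epsilon> \<le> 1" and x: "x > 0" and lx: "ln x > 2 * \<epsilon>" "ln x / x < \<epsilon>^2 / 144"
    and m: "12 / \<epsilon> * ln x - 1 \<le> m" "m \<le> 12 / \<epsilon> * ln x"
  shows "x^2 * (2 powr (12 * ln x) * (x - (2 * \<epsilon> * x - m) / 2) ^ m) < x ^ m"
proof -
  define a where "a = \<epsilon> - m / (2 * x)"
  have base: "x - (2 * \<epsilon> * x - m) / 2 = x * (1 - a)"
    unfolding a_def using x by (simp add: field_simps)
  have "0 \<le> m / (2 * x)" using x by simp
  then have "0 \<le> 1 - a" unfolding a_def using e by linarith
  then have "(x * (1 - a)) ^ m \<le> (x * exp (-a)) ^ m"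
    using x exp_ge_add_one_self[of "-a"] by (intro power_mono mult_left_mono) auto
  also have "\<dots> = x ^ m * exp (- a * m)"
    by (simp add: power_mult_distrib exp_of_nat_mult[symmetric] mult_ac)
  finally have power_le: "(x * (1 - a)) ^ m \<le> x ^ m * exp (- a * m)" .
  have square: "x^2 = exp (2 * ln x)"
    using x by (metis exp_ln ln_realpow of_nat_numeral zero_less_power)
  have "x^2 * (2 powr (12 * ln x) * (x - (2 * \<epsilon> * x - m) / 2) ^ m)
      = exp (2 * ln x) * (exp (12 * ln x * ln 2) * (x * (1 - a)) ^ m)"
    unfolding square base by (simp add: powr_def mult_ac)
  also have "\<dots> \<le> exp (2 * ln x) * (exp (12 * ln x * ln 2) * (x ^ m * exp (- a * m)))"
    using power_le by simp
  also have "\<dots> = x ^ m * exp (2 * ln x + 12 * ln x * ln 2 - \<epsilon> * m + m^2 / (2 * x))"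
    unfolding a_def by (simp add: exp_add[symmetric] algebra_simps power2_eq_square)
  also have "\<dots> < x ^ m"
    using sampling_exponent_neg[OF e(1) x lx m] x by simp
  finally show ?thesis .
qed

lemma eventually_ln_bounds:
  fixes \<epsilon> :: real
  assumes "\<epsilon> > 0"
  shows "\<forall>\<^sub>F n in sequentially. n \<ge> 2 \<and> ln (real n) > 2 * \<epsilon> \<and> ln (real n) / real n < \<epsilon>^2 / 144"
proof -
  have "filterlim (\<lambda>n. ln (real n)) at_top sequentially"
    by (rule filterlim_compose[OF ln_at_top filterlim_real_sequentially])
  then have "\<forall>\<^sub>F n in sequentially. ln (real n) > 2 * \<epsilon>"
    unfolding filterlim_at_top_dense by blast
  moreover have "((\<lambda>n. ln (real n) / real n) \<longlongrightarrow> 0) sequentially"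
    by (rule filterlim_compose[OF ln_x_over_x_tendsto_0 filterlim_real_sequentially])
  then have "\<forall>\<^sub>F n in sequentially. ln (real n) / real n < \<epsilon>^2 / 144"
    using assms by (intro order_tendstoD(2)) auto
  moreover have "\<forall>\<^sub>F n in sequentially. n \<ge> (2::nat)" by (rule eventually_ge_at_top)
  ultimately show ?thesis by eventually_elim auto
qed

lemma exists_small_common_neighbour_hitting_set:
  fixes \<epsilon> :: real and V :: "nat set"
  assumes e: "\<epsilon> > 0" and fin: "finite V" and cV: "card V = n" and n: "n \<ge> 1"
    and ln_n: "ln (real n) > 2 * \<epsilon>" "ln (real n) / real n < \<epsilon>^2 / 144"
    and md: "real (min_degree V E) \<ge> (1/2 + \<epsilon>) * real n"
  shows "\<exists>L \<subseteq> V. real (card L) \<le> (12 / \<epsilon>) * ln (real n) \<and>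
           (\<forall>u \<in> V. \<forall>v \<in> V. real (card {w \<in> L. E u w \<and> E v w}) \<ge> 12 * ln (real n))"
proof -
  define S where "S = (\<lambda>(u, v). {w\<in>V. E u w \<and> E v w})"
  define m where "m = nat \<lfloor>12 / \<epsilon> * ln (real n)\<rfloor>"
  have "12 / \<epsilon> * ln (real n) \<ge> 0" using e ln_n by simp
  then have m: "12 / \<epsilon> * ln (real n) - 1 \<le> real m" "real m \<le> 12 / \<epsilon> * ln (real n)"
    unfolding m_def by linarith+
  have SV: "S p \<subseteq> V" for p unfolding S_def by (auto split: prod.split)
  have common: "2 * \<epsilon> * real n \<le> real (card (S p))" if "p \<in> V \<times> V" for p
  proof -
    obtain u v where p: "p = (u, v)" "u \<in> V" "v \<in> V" using \<open>p \<in> V \<times> V\<close> by (cases p) auto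
    have "2 * min_degree V E \<le> card (S p) + n"
      using card_common_neighbours_ge[OF fin p(2,3), of E] cV by (simp add: p S_def)
    then have "2 * real (min_degree V E) \<le> real (card (S p)) + real n"
      by (metis of_nat_add of_nat_le_iff of_nat_mult of_nat_numeral)
    then show ?thesis using md by (simp add: algebra_simps)
  qed
  have "V \<noteq> {}" using n cV by auto
  then obtain u where "u \<in> V" by blast
  then have "2 * \<epsilon> * real n \<le> real n"
    using common[of "(u, u)"] card_mono[OF fin, of "S (u, u)"] cV by (force simp: S_def)
  then have "2 * \<epsilon> \<le> 1" using n by simp
  then have "real (card (V \<times> V)) * (2 powr (12 * ln (real n)) * (real (card V) - (2 * \<epsilon> * real n - real m) / 2) ^ m)
      < real (card V) ^ m"
    using union_bound_lt[OF e _ _ ln_n m] n cV by (simp add: card_cartesian_product power2_eq_square)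
  then obtain xs where xs: "set xs \<subseteq> V" "length xs = m"
    and hits: "\<forall>p\<in>V \<times> V. 12 * ln (real n) \<le> real (card (S p \<inter> set xs))"
    using exists_list_hitting_all[of V "V \<times> V" S "2 * \<epsilon> * real n", OF fin _ SV common] fin by blast
  show ?thesis
  proof (intro exI[of _ "set xs"] conjI ballI)
    show "real (card (set xs)) \<le> 12 / \<epsilon> * ln (real n)"
      using card_length[of xs] xs(2) m(2) by linarith
    fix u v assume "u \<in> V" "v \<in> V"
    moreover have "{w \<in> set xs. E u w \<and> E v w} = S (u, v) \<inter> set xs"
      using xs(1) unfolding S_def by auto
    ultimately show "12 * ln (real n) \<le> real (card {w \<in> set xs. E u w \<and> E v w})"
      using hits by simp
  qed (use xs(1) in simp)
qed

theorem lemma1: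
  fixes \<epsilon> :: real
  assumes "\<epsilon> > 0"
  shows "\<exists>N::nat. \<forall>(V::nat set) E n. simple_graph V E \<longrightarrow> card V = n \<longrightarrow> n \<ge> N \<longrightarrow>
           real (min_degree V E) \<ge> (1/2 + \<epsilon>) * real n \<longrightarrow>
           (\<exists>L \<subseteq> V. real (card L) \<le> (12 / \<epsilon>) * ln (real n) \<and>
              (\<forall>u \<in> V - L. \<forall>v \<in> V - L. u \<noteq> v \<longrightarrow>
                  real (card {w \<in> L. E u w \<and> E v w}) \<ge> 12 * ln (real n)))"
proof -
  obtain N where N: "\<And>n. n \<ge> N \<Longrightarrow> n \<ge> 2 \<and> ln (real n) > 2 * \<epsilon> \<and> ln (real n) / real n < \<epsilon>^2 / 144"
    using eventually_ln_bounds[OF assms] unfolding eventually_sequentially by blast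
  show ?thesis
  proof (intro exI[of _ N] allI impI)
    fix V :: "nat set" and E n
    assume G: "simple_graph V E" and cV: "card V = n" and "N \<le> n"
      and md: "real (min_degree V E) \<ge> (1/2 + \<epsilon>) * real n"
    have fin: "finite V" using G unfolding simple_graph_def by blast
    have n: "n \<ge> 1" and ln_n: "ln (real n) > 2 * \<epsilon>" "ln (real n) / real n < \<epsilon>^2 / 144"
      using N[OF \<open>N \<le> n\<close>] by auto
    obtain L where "L \<subseteq> V" "real (card L) \<le> (12 / \<epsilon>) * ln (real n)"
      and "\<forall>u \<in> V. \<forall>v \<in> V. real (card {w \<in> L. E u w \<and> E v w}) \<ge> 12 * ln (real n)"
      using exists_small_common_neighbour_hitting_set[OF assms fin cV n ln_n md] by blast
    then show "\<exists>L \<subseteq> V. real (card L) \<le> (12 / \<epsilon>) * ln (real n) \<and>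
        (\<forall>u \<in> V - L. \<forall>v \<in> V - L. u \<noteq> v \<longrightarrow> real (card {w \<in> L. E u w \<and> E v w}) \<ge> 12 * ln (real n))"
      by blast
  qed
qed

end
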